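(* Let $\Omega\subset\mathbb{R}^2$ be a smooth bounded domain, $(u_p)_{p>1}$ solutions of $-\Delta u=|u|^{p-1}u$ in $\Omega$, $u=0$ on $\partial\Omega$, with $p\int_\Omega|\nabla u_p|^2dx\to\beta\in\mathbb{R}$, and let $k\ge1$ and families $(x_{i,p})$, $i=1,\dots,k$, with $p|u_p(x_{i,p})|^{p-1}\to+\infty$, satisfy (along a sequence $p\to+\infty$) $(\mathcal P_1^k)$, $(\mathcal P_2^k)$, $(\mathcal P_3^k)$. Let $(x_p)\subset\Omega$ with $p|u_p(x_p)|^{p-1}\to+\infty$, $\mu_p:=(p|u_p(x_p)|^{p-1})^{-1/2}$, and let $i\in\{1,\dots,k\}$ be such that (up to a sequence) $R_{k,p}(x_p)=|x_{i,p}-x_p|$. If $\frac{|x_p-x_{i,p}|}{\mu_{i,p}}\to+\infty$, then $\frac{\mu_{i,p}}{\mu_p}\to0$.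
   Context: $\mu_{i,p}:=(p|u_p(x_{i,p})|^{p-1})^{-1/2}$, $R_{k,p}(x):=\min_{i\le k}|x-x_{i,p}|$, $U(x)=\log\left(\frac{1}{1+\frac18|x|^2}\right)^2$. $(\mathcal P_1^k)$: $|x_{i,p}-x_{j,p}|/\mu_{i,p}\to+\infty$ for $i\ne j$. $(\mathcal P_2^k)$: for each $i$, $v_{i,p}(x):=\frac{p}{u_p(x_{i,p})}(u_p(x_{i,p}+\mu_{i,p}x)-u_p(x_{i,p}))\to U$ in $C^1_{loc}(\mathbb{R}^2)$. $(\mathcal P_3^k)$: $\exists C>0$ with $pR_{k,p}(x)^2|u_p(x)|^{p-1}\le C$ for $p$ large and all $x\in\Omega$. *)

theory Defs
  imports "HOL-Analysis.Analysis"
begin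

type_synonym R2 = "real^2"

definition pd :: "2 \<Rightarrow> (R2 \<Rightarrow> real) \<Rightarrow> R2 \<Rightarrow> real" where
  "pd j f x = frechet_derivative f (at x) (axis j 1)"

fun pds :: "2 list \<Rightarrow> (R2 \<Rightarrow> real) \<Rightarrow> R2 \<Rightarrow> real" where
  "pds [] f = f"
| "pds (j # js) f = pd j (pds js f)"

definition grad :: "(R2 \<Rightarrow> real) \<Rightarrow> R2 \<Rightarrow> R2" where
  "grad f x = (\<chi> j. pd j f x)"

definition laplacian :: "(R2 \<Rightarrow> real) \<Rightarrow> R2 \<Rightarrow> real" where
  "laplacian f x = pd 1 (pd 1 f) x + pd 2 (pd 2 f) x"

(* C^infinity on an open set: all iterated partial derivatives exist (hence are continuous) *)
definition smooth_on :: "R2 set \<Rightarrow> (R2 \<Rightarrow> real) \<Rightarrow> bool" where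
  "smooth_on S f \<longleftrightarrow> (\<forall>js. \<forall>x\<in>S. pds js f differentiable (at x))"

definition C2_on :: "R2 set \<Rightarrow> (R2 \<Rightarrow> real) \<Rightarrow> bool" where
  "C2_on S f \<longleftrightarrow> (\<forall>js. length js \<le> 2 \<longrightarrow> continuous_on S (pds js f)) \<and>
                  (\<forall>js. length js \<le> 1 \<longrightarrow> (\<forall>x\<in>S. pds js f differentiable (at x)))"

definition smooth_bounded_domain :: "R2 set \<Rightarrow> bool" where
  "smooth_bounded_domain \<Omega> \<longleftrightarrow> open \<Omega> \<and> connected \<Omega> \<and> bounded \<Omega> \<and> \<Omega> \<noteq> {} \<and>
     (\<exists>\<rho>. smooth_on UNIV \<rho> \<and> \<Omega> = {x. \<rho> x < 0} \<and> (\<forall>x. \<rho> x = 0 \<longrightarrow> grad \<rho> x \<noteq> 0))"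

definition lane_emden_solution :: "R2 set \<Rightarrow> real \<Rightarrow> (R2 \<Rightarrow> real) \<Rightarrow> bool" where
  "lane_emden_solution \<Omega> p u \<longleftrightarrow> C2_on \<Omega> u \<and> continuous_on (closure \<Omega>) u \<and>
     (\<forall>x\<in>frontier \<Omega>. u x = 0) \<and>
     (\<forall>x\<in>\<Omega>. - laplacian u x = \<bar>u x\<bar> powr (p - 1) * u x)"

definition U_lim :: "R2 \<Rightarrow> real" where
  "U_lim x = ln ((1 / (1 + (1/8) * norm x ^ 2)) ^ 2)"

definition mu_par :: "real \<Rightarrow> (R2 \<Rightarrow> real) \<Rightarrow> R2 \<Rightarrow> real" where
  "mu_par p u x = (p * \<bar>u x\<bar> powr (p - 1)) powr (-1/2)"

definition v_resc :: "real \<Rightarrow> (R2 \<Rightarrow> real) \<Rightarrow> R2 \<Rightarrow> R2 \<Rightarrow> real" where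
  "v_resc p u c y = p / u c * (u (c + mu_par p u c *\<^sub>R y) - u c)"

definition R_dist :: "nat \<Rightarrow> (nat \<Rightarrow> R2) \<Rightarrow> R2 \<Rightarrow> real" where
  "R_dist k xs y = Min ((\<lambda>i. dist y (xs i)) ` {1..k})"

definition C1_loc_conv :: "(nat \<Rightarrow> R2 \<Rightarrow> real) \<Rightarrow> (nat \<Rightarrow> R2 set) \<Rightarrow> (R2 \<Rightarrow> real) \<Rightarrow> bool" where
  "C1_loc_conv v D V \<longleftrightarrow> (\<forall>K. compact K \<longrightarrow> (\<forall>\<epsilon>>0. eventually (\<lambda>n. \<forall>y\<in>K. y \<in> D n \<and>
       \<bar>v n y - V y\<bar> < \<epsilon> \<and> norm (grad (v n) y - grad V y) < \<epsilon>) sequentially))"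

end

theory Submission
  imports Defs
begin

text \<open>Only \<open>(\<P>\<^sub>3\<^sup>k)\<close> at the point \<open>x\<^sub>p\<close> is needed: since \<open>R\<^sub>k\<^sub>,\<^sub>p(x\<^sub>p) = |x\<^sub>p - x\<^sub>i\<^sub>,\<^sub>p|\<close> and
  \<open>p|u\<^sub>p(x\<^sub>p)|\<^sup>p\<^sup>-\<^sup>1 = \<mu>\<^sub>p\<^sup>-\<^sup>2\<close>, it says \<open>|x\<^sub>p - x\<^sub>i\<^sub>,\<^sub>p| \<le> \<surd>C \<mu>\<^sub>p\<close>. Hence
  \<open>\<mu>\<^sub>i\<^sub>,\<^sub>p / \<mu>\<^sub>p \<le> \<surd>C \<mu>\<^sub>i\<^sub>,\<^sub>p / |x\<^sub>p - x\<^sub>i\<^sub>,\<^sub>p| \<rightarrow> 0\<close>.\<close>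

lemma powr_minus_half_squared:
  fixes a :: real
  assumes "a > 0"
  shows "(a powr (-1/2)) ^ 2 = 1 / a"
proof -
  have "(a powr (-1/2)) ^ 2 = a powr (-1/2 + -1/2)"
    by (simp only: power2_eq_square powr_add)
  also have "\<dots> = 1 / a"
    using assms by (simp add: powr_minus_divide)
  finally show ?thesis .
qed

lemma mu_par_nonneg: "mu_par p u x \<ge> 0"
  unfolding mu_par_def by (rule powr_ge_zero)

lemma mu_par_pos:
  assumes "p * \<bar>u x\<bar> powr (p - 1) > 0"
  shows "mu_par p u x > 0"
  unfolding mu_par_def powr_gt_zero using assms by linarith

lemma dist_le_mu_par_if_scaled_bound:
  assumes pos: "p * \<bar>u x\<bar> powr (p - 1) > 0" and "d \<ge> 0"
    and bound: "p * d ^ 2 * \<bar>u x\<bar> powr (p - 1) \<le> C"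
  shows "d \<le> sqrt C * mu_par p u x"
proof -
  define a where "a = p * \<bar>u x\<bar> powr (p - 1)"
  have "a > 0"
    using pos by (simp add: a_def)
  have mu_sq: "mu_par p u x ^ 2 = 1 / a"
    unfolding mu_par_def a_def [symmetric] using \<open>a > 0\<close> by (rule powr_minus_half_squared)
  have "d ^ 2 * a \<le> C"
    using bound by (simp add: a_def mult.left_commute)
  moreover have "0 \<le> d ^ 2 * a"
    using \<open>a > 0\<close> by simp
  ultimately have "C \<ge> 0"
    by linarith
  have "d ^ 2 = (d ^ 2 * a) * mu_par p u x ^ 2"
    using \<open>a > 0\<close> mu_sq by simp
  also have "\<dots> \<le> C * mu_par p u x ^ 2"
    using \<open>d ^ 2 * a \<le> C\<close> by (rule mult_right_mono) simp
  also have "\<dots> = (sqrt C * mu_par p u x) ^ 2"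
    using \<open>C \<ge> 0\<close> by (simp add: power_mult_distrib)
  finally show ?thesis
    by (rule power2_le_imp_le) (simp add: \<open>C \<ge> 0\<close> mu_par_nonneg)
qed

lemma ratio_tendsto_zero_if_dist_dominates:
  fixes m M d :: "nat \<Rightarrow> real"
  assumes far: "filterlim (\<lambda>n. d n / m n) at_top sequentially"
    and m_nonneg: "\<And>n. m n \<ge> 0"
    and near: "eventually (\<lambda>n. 0 < M n \<and> d n \<le> c * M n) sequentially"
  shows "(\<lambda>n. m n / M n) \<longlonglongrightarrow> 0"
proof (rule real_tendsto_sandwich [where f = "\<lambda>_. 0" and h = "\<lambda>n. c * (m n / d n)"])
  have "(\<lambda>n. inverse (d n / m n)) \<longlonglongrightarrow> 0"
    using far by (rule tendsto_inverse_0_at_top)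
  then show "(\<lambda>n. c * (m n / d n)) \<longlonglongrightarrow> 0"
    using tendsto_mult_right_zero by fastforce
  have "eventually (\<lambda>n. d n / m n > 0) sequentially"
    using far by (simp add: filterlim_at_top_dense)
  with near show "eventually (\<lambda>n. m n / M n \<le> c * (m n / d n)) sequentially"
  proof eventually_elim
    case (elim n)
    then have "d n > 0" "m n > 0" "M n > 0"
      using m_nonneg[of n] by (auto simp: zero_less_divide_iff)
    then have "m n * d n \<le> m n * (c * M n)"
      using elim by (intro mult_left_mono) auto
    with \<open>d n > 0\<close> \<open>M n > 0\<close> show ?case
      by (simp add: divide_le_eq pos_le_divide_eq ac_simps)
  qed
  show "eventually (\<lambda>n. 0 \<le> m n / M n) sequentially"
    using near by eventually_elim (simp add: m_nonneg)
qed simp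

theorem proposition2p6:
  fixes \<Omega> :: "R2 set" and p :: "nat \<Rightarrow> real" and u :: "nat \<Rightarrow> R2 \<Rightarrow> real"
    and \<beta> :: real and k :: nat and xs :: "nat \<Rightarrow> nat \<Rightarrow> R2" and x :: "nat \<Rightarrow> R2" and i :: nat
  assumes dom: "smooth_bounded_domain \<Omega>"
    and p_gt1: "\<forall>n. p n > 1"
    and p_inf: "filterlim p at_top sequentially"
    and sol: "\<forall>n. lane_emden_solution \<Omega> (p n) (u n)"
    and energy_int: "\<forall>n. (\<lambda>y. norm (grad (u n) y) ^ 2) integrable_on \<Omega>"
    and energy: "(\<lambda>n. p n * integral \<Omega> (\<lambda>y. norm (grad (u n) y) ^ 2)) \<longlonglongrightarrow> \<beta>"
    and k: "k \<ge> 1"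
    and xs_in: "\<forall>j\<in>{1..k}. \<forall>n. xs j n \<in> \<Omega>"
    and xs_blow: "\<forall>j\<in>{1..k}. filterlim (\<lambda>n. p n * \<bar>u n (xs j n)\<bar> powr (p n - 1)) at_top sequentially"
    and P1: "\<forall>j\<in>{1..k}. \<forall>l\<in>{1..k}. j \<noteq> l \<longrightarrow>
              filterlim (\<lambda>n. dist (xs j n) (xs l n) / mu_par (p n) (u n) (xs j n)) at_top sequentially"
    and P2: "\<forall>j\<in>{1..k}. C1_loc_conv (\<lambda>n. v_resc (p n) (u n) (xs j n))
              (\<lambda>n. {y. xs j n + mu_par (p n) (u n) (xs j n) *\<^sub>R y \<in> \<Omega>}) U_lim"
    and P3: "\<exists>C>0. eventually (\<lambda>n. \<forall>y\<in>\<Omega>.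
              p n * (R_dist k (\<lambda>j. xs j n) y) ^ 2 * \<bar>u n y\<bar> powr (p n - 1) \<le> C) sequentially"
    and x_in: "\<forall>n. x n \<in> \<Omega>"
    and x_blow: "filterlim (\<lambda>n. p n * \<bar>u n (x n)\<bar> powr (p n - 1)) at_top sequentially"
    and i: "i \<in> {1..k}"
    and R_eq: "\<forall>n. R_dist k (\<lambda>j. xs j n) (x n) = dist (xs i n) (x n)"
    and far: "filterlim (\<lambda>n. dist (x n) (xs i n) / mu_par (p n) (u n) (xs i n)) at_top sequentially"
  shows "(\<lambda>n. mu_par (p n) (u n) (xs i n) / mu_par (p n) (u n) (x n)) \<longlonglongrightarrow> 0"
proof -
  obtain C where bound: "eventually (\<lambda>n. \<forall>y\<in>\<Omega>.
      p n * (R_dist k (\<lambda>j. xs j n) y) ^ 2 * \<bar>u n y\<bar> powr (p n - 1) \<le> C) sequentially"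
    using P3 by blast
  have "eventually (\<lambda>n. p n * \<bar>u n (x n)\<bar> powr (p n - 1) > 0) sequentially"
    using x_blow by (simp add: filterlim_at_top_dense)
  with bound have near: "eventually (\<lambda>n. 0 < mu_par (p n) (u n) (x n) \<and>
      dist (x n) (xs i n) \<le> sqrt C * mu_par (p n) (u n) (x n)) sequentially"
  proof eventually_elim
    case (elim n)
    then have "p n * dist (x n) (xs i n) ^ 2 * \<bar>u n (x n)\<bar> powr (p n - 1) \<le> C"
      using x_in R_eq by (metis dist_commute)
    then show ?case
      using elim(2) by (blast intro: mu_par_pos dist_le_mu_par_if_scaled_bound zero_le_dist)
  qed
  show ?thesis
    using ratio_tendsto_zero_if_dist_dominates [OF far mu_par_nonneg near] .
qed

end
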